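(* Let $d\ge3$, $n\ge1$, $0\le c<\frac{1}{d(d-1)}$, and let $$\rho(c,0)=\Big(\frac1{2d}-\frac{d-1}2c\Big)\sum_{i=0}^{d-1}|ii\rangle\langle ii|+\frac1{d(d-1)}\sum_{i<j}|\psi^-_{ij}\rangle\langle\psi^-_{ij}|+c\sum_{i<j}|\psi^+_{ij}\rangle\langle\psi^+_{ij}|.$$ Then the null space of $(\rho(c,0)^{PT})^{\otimes n}$ contains no nonzero vector of Schmidt rank less than three.
   Context: $|\psi^{\pm}_{ij}\rangle=\frac1{\sqrt2}(|ij\rangle\pm|ji\rangle)$, sums over $0\le i<j\le d-1$. $\rho^{PT}$ is the partial transpose on the second factor of $\mathbb{C}^d\otimes\mathbb{C}^d$. The operator acts on $(\mathbb{C}^d\otimes\mathbb{C}^d)^{\otimes n}$, regarded as a bipartite space $(\mathbb{C}^d)^{\otimes n}_A\otimes(\mathbb{C}^d)^{\otimes n}_B$ with the first factor of each copy belonging to $A$; Schmidt rank is with respect to this bipartition. *)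

theory Defs
  imports Complex_Main
begin

text \<open>Vectors of C^d (x) C^d are functions on index pairs (i,j), i,j < d.
  Operators are matrices given by their entries M p q.\<close>

definition ket :: "nat \<Rightarrow> nat \<Rightarrow> nat \<times> nat \<Rightarrow> complex" where
  "ket i j = (\<lambda>p. if p = (i, j) then 1 else 0)"

definition psi_plus :: "nat \<Rightarrow> nat \<Rightarrow> nat \<times> nat \<Rightarrow> complex" where
  "psi_plus i j = (\<lambda>p. (ket i j p + ket j i p) / complex_of_real (sqrt 2))"

definition psi_minus :: "nat \<Rightarrow> nat \<Rightarrow> nat \<times> nat \<Rightarrow> complex" where
  "psi_minus i j = (\<lambda>p. (ket i j p - ket j i p) / complex_of_real (sqrt 2))"

definition outer :: "('a \<Rightarrow> complex) \<Rightarrow> ('a \<Rightarrow> complex) \<Rightarrow> 'a \<Rightarrow> 'a \<Rightarrow> complex" where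
  "outer u v = (\<lambda>p q. u p * cnj (v q))"

definition pairs_lt :: "nat \<Rightarrow> (nat \<times> nat) set" where
  "pairs_lt d = {(i, j). i < j \<and> j < d}"

definition rho :: "nat \<Rightarrow> real \<Rightarrow> nat \<times> nat \<Rightarrow> nat \<times> nat \<Rightarrow> complex" where
  "rho d c = (\<lambda>p q.
     complex_of_real (1 / (2 * real d) - (real d - 1) / 2 * c)
       * (\<Sum>i<d. outer (ket i i) (ket i i) p q)
   + complex_of_real (1 / (real d * (real d - 1)))
       * (\<Sum>(i, j)\<in>pairs_lt d. outer (psi_minus i j) (psi_minus i j) p q)
   + complex_of_real c
       * (\<Sum>(i, j)\<in>pairs_lt d. outer (psi_plus i j) (psi_plus i j) p q))"

definition partial_transpose ::
  "(nat \<times> nat \<Rightarrow> nat \<times> nat \<Rightarrow> complex) \<Rightarrow> nat \<times> nat \<Rightarrow> nat \<times> nat \<Rightarrow> complex" where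
  "partial_transpose M = (\<lambda>(i, j) (k, l). M (i, l) (k, j))"

definition idx :: "nat \<Rightarrow> nat \<Rightarrow> nat list set" where
  "idx d n = {a. length a = n \<and> (\<forall>x\<in>set a. x < d)}"

text \<open>A vector of (C^d (x) C^d)^{(x) n}, regarded as A (x) B with A = first factors,
  B = second factors, is a function of (a, b) with a, b \<in> idx d n; copy k carries
  the basis index (a!k, b!k).\<close>

definition tensor_pow ::
  "nat \<Rightarrow> (nat \<times> nat \<Rightarrow> nat \<times> nat \<Rightarrow> complex)
     \<Rightarrow> nat list \<times> nat list \<Rightarrow> nat list \<times> nat list \<Rightarrow> complex" where
  "tensor_pow n M = (\<lambda>(a, b) (a', b'). \<Prod>k<n. M (a ! k, b ! k) (a' ! k, b' ! k))"

definition op_apply ::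
  "nat \<Rightarrow> nat \<Rightarrow> (nat list \<times> nat list \<Rightarrow> nat list \<times> nat list \<Rightarrow> complex)
     \<Rightarrow> (nat list \<times> nat list \<Rightarrow> complex) \<Rightarrow> nat list \<times> nat list \<Rightarrow> complex" where
  "op_apply d n M v = (\<lambda>p. \<Sum>q\<in>idx d n \<times> idx d n. M p q * v q)"

definition in_null_space ::
  "nat \<Rightarrow> nat \<Rightarrow> (nat list \<times> nat list \<Rightarrow> nat list \<times> nat list \<Rightarrow> complex)
     \<Rightarrow> (nat list \<times> nat list \<Rightarrow> complex) \<Rightarrow> bool" where
  "in_null_space d n M v \<longleftrightarrow> (\<forall>p\<in>idx d n \<times> idx d n. op_apply d n M v p = 0)"

definition nonzero_vec :: "nat \<Rightarrow> nat \<Rightarrow> (nat list \<times> nat list \<Rightarrow> complex) \<Rightarrow> bool" where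
  "nonzero_vec d n v \<longleftrightarrow> (\<exists>p\<in>idx d n \<times> idx d n. v p \<noteq> 0)"

definition schmidt_rank :: "nat \<Rightarrow> nat \<Rightarrow> (nat list \<times> nat list \<Rightarrow> complex) \<Rightarrow> nat" where
  "schmidt_rank d n v = (LEAST k. \<exists>x y :: nat \<Rightarrow> nat list \<Rightarrow> complex.
      \<forall>a\<in>idx d n. \<forall>b\<in>idx d n. v (a, b) = (\<Sum>r<k. x r a * y r b))"

end

theory Submission
  imports Defs
begin

text \<open>
  Put \<beta> = 1/(d(d-1)). The partial transpose M of rho(c,0) multiplies each |ij> with i \<noteq> j by
  \<gamma> = (\<beta> + c)/2 > 0 and acts on the span of the |kk> as (\<alpha> - \<epsilon>) I + \<epsilon> J, J the all-ones
  matrix, where \<alpha> \<noteq> \<epsilon> precisely because c < \<beta>.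
  Induct on n, splitting a vector v of (C^d (x) C^d)^(x)n into the slices v_kl fixed by the
  first copy. If M^(x)n v = 0, then M^(x)(n-1) kills the off-diagonal slices and maps all
  diagonal slices to the same vector. Slices inherit Schmidt rank at most 2, so by induction
  the off-diagonal slices vanish. A diagonal 3 x 3 matrix of rank at most 2 has a zero
  diagonal entry (here d \<ge> 3 is used), so some diagonal slice vanishes; hence the common
  image is 0 and, by induction again, every diagonal slice vanishes.
\<close>

lemma finite_idx: "finite (idx d n)"
proof -
  have "idx d n = {xs. set xs \<subseteq> {..<d} \<and> length xs = n}"
    by (auto simp: idx_def)
  then show ?thesis
    using finite_lists_length_eq[of "{..<d}" n] by simp
qed

lemma idx_0: "idx d 0 = {[]}"
  by (auto simp: idx_def)

lemma Cons_in_idx_Suc_iff [simp]: "i # a \<in> idx d (Suc n) \<longleftrightarrow> i < d \<and> a \<in> idx d n"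
  by (auto simp: idx_def)

lemma idx_Suc: "idx d (Suc n) = (\<lambda>(i, a). i # a) ` ({..<d} \<times> idx d n)"
  by (auto simp: idx_def length_Suc_conv image_iff)

lemma sum_idx_Suc: "(\<Sum>a\<in>idx d (Suc n). f a) = (\<Sum>i<d. \<Sum>a\<in>idx d n. f (i # a))"
proof -
  have "inj_on (\<lambda>(i, a). i # a) ({..<d} \<times> idx d n)"
    by (auto simp: inj_on_def)
  then show ?thesis
    by (simp add: idx_Suc sum.reindex sum.cartesian_product split_def)
qed

definition slice :: "(nat list \<times> nat list \<Rightarrow> 'a) \<Rightarrow> nat \<Rightarrow> nat \<Rightarrow> nat list \<times> nat list \<Rightarrow> 'a" where
  "slice v k l = (\<lambda>(a, b). v (k # a, l # b))"

lemma slice_apply [simp]: "slice v k l (a, b) = v (k # a, l # b)"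
  by (simp add: slice_def)

lemma nonzero_vec_Suc_iff:
  "nonzero_vec d (Suc n) v \<longleftrightarrow> (\<exists>k<d. \<exists>l<d. nonzero_vec d n (slice v k l))"
  by (auto simp: nonzero_vec_def idx_Suc)

lemma tensor_pow_Cons:
  "tensor_pow (Suc n) M (i # a, j # b) (k # a', l # b') = M (i, j) (k, l) * tensor_pow n M (a, b) (a', b')"
  by (simp add: tensor_pow_def prod.lessThan_Suc_shift del: prod.lessThan_Suc)

lemma op_apply_tensor_pow_Cons:
  "op_apply d (Suc n) (tensor_pow (Suc n) M) v (i # a, j # b) =
     (\<Sum>k<d. \<Sum>l<d. M (i, j) (k, l) * op_apply d n (tensor_pow n M) (slice v k l) (a, b))"
proof -
  have "op_apply d (Suc n) (tensor_pow (Suc n) M) v (i # a, j # b) =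
      (\<Sum>k<d. \<Sum>a'\<in>idx d n. \<Sum>l<d. \<Sum>b'\<in>idx d n.
         M (i, j) (k, l) * (tensor_pow n M (a, b) (a', b') * v (k # a', l # b')))"
    by (simp add: op_apply_def sum.cartesian_product' sum_idx_Suc tensor_pow_Cons mult.assoc)
  also have "\<dots> = (\<Sum>k<d. \<Sum>l<d. \<Sum>a'\<in>idx d n. \<Sum>b'\<in>idx d n.
         M (i, j) (k, l) * (tensor_pow n M (a, b) (a', b') * v (k # a', l # b')))"
    by (rule sum.cong[OF refl], rule sum.swap)
  finally show ?thesis
    by (simp add: op_apply_def sum_distrib_left sum.cartesian_product')
qed

lemma in_null_space_tensor_pow_Suc_iff:
  "in_null_space d (Suc n) (tensor_pow (Suc n) M) v \<longleftrightarrow>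
     (\<forall>i<d. \<forall>j<d. \<forall>p\<in>idx d n \<times> idx d n.
        (\<Sum>k<d. \<Sum>l<d. M (i, j) (k, l) * op_apply d n (tensor_pow n M) (slice v k l) p) = 0)"
  by (auto simp: in_null_space_def idx_Suc op_apply_tensor_pow_Cons)

lemma op_apply_eq_0_of_not_nonzero_vec:
  "\<not> nonzero_vec d n v \<Longrightarrow> op_apply d n M v p = 0"
  by (auto simp: nonzero_vec_def op_apply_def intro!: sum.neutral)

definition schmidt_decomposable :: "nat \<Rightarrow> nat \<Rightarrow> nat \<Rightarrow> (nat list \<times> nat list \<Rightarrow> complex) \<Rightarrow> bool" where
  "schmidt_decomposable d n k v \<longleftrightarrow> (\<exists>x y :: nat \<Rightarrow> nat list \<Rightarrow> complex.
      \<forall>a\<in>idx d n. \<forall>b\<in>idx d n. v (a, b) = (\<Sum>r<k. x r a * y r b))"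

lemma schmidt_decomposable_card_idx: "schmidt_decomposable d n (card (idx d n)) v"
proof -
  obtain h where h: "bij_betw h {..<card (idx d n)} (idx d n)"
    using ex_bij_betw_nat_finite[OF finite_idx] atLeast0LessThan by metis
  have "(\<Sum>r<card (idx d n). (if h r = a then 1 else 0) * v (h r, b)) =
      (\<Sum>a'\<in>idx d n. (if a' = a then 1 else 0) * v (a', b))" for a b
    by (rule sum.reindex_bij_betw[OF h])
  then have "v (a, b) = (\<Sum>r<card (idx d n). (if h r = a then 1 else 0) * v (h r, b))"
    if "a \<in> idx d n" for a b
    using that by (simp add: finite_idx if_distrib[of "\<lambda>z. z * _"] cong: if_cong)
  then show ?thesis
    unfolding schmidt_decomposable_def
    by (intro exI[of _ "\<lambda>r a. if h r = a then 1 else 0"] exI[of _ "\<lambda>r b. v (h r, b)"]) blast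
qed

lemma schmidt_decomposable_schmidt_rank: "schmidt_decomposable d n (schmidt_rank d n v) v"
  unfolding schmidt_rank_def schmidt_decomposable_def[symmetric]
  by (rule LeastI[of "\<lambda>k. schmidt_decomposable d n k v", OF schmidt_decomposable_card_idx])

lemma schmidt_decomposable_mono:
  assumes "schmidt_decomposable d n k v" "k \<le> k'"
  shows "schmidt_decomposable d n k' v"
proof -
  obtain x y where xy: "\<forall>a\<in>idx d n. \<forall>b\<in>idx d n. v (a, b) = (\<Sum>r<k. x r a * y r b)"
    using assms(1) unfolding schmidt_decomposable_def by blast
  have "(\<Sum>r<k'. (if r < k then x r a else 0) * y r b) = (\<Sum>r<k. x r a * y r b)" for a b
    using assms(2) by (intro sum.mono_neutral_cong_right) auto
  then show ?thesis
    unfolding schmidt_decomposable_def using xy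
    by (intro exI[of _ "\<lambda>r a. if r < k then x r a else 0"] exI[of _ y]) simp
qed

lemma schmidt_decomposable_slice:
  assumes "schmidt_decomposable d (Suc n) k v" "i < d" "j < d"
  shows "schmidt_decomposable d n k (slice v i j)"
proof -
  obtain x y where xy: "\<forall>a\<in>idx d (Suc n). \<forall>b\<in>idx d (Suc n). v (a, b) = (\<Sum>r<k. x r a * y r b)"
    using assms(1) unfolding schmidt_decomposable_def by blast
  show ?thesis
    unfolding schmidt_decomposable_def
    by (rule exI[of _ "\<lambda>r a. x r (i # a)"], rule exI[of _ "\<lambda>r b. y r (j # b)"]) (simp add: xy assms)
qed

lemma schmidt_decomposable_2_iff:
  "schmidt_decomposable d n 2 v \<longleftrightarrow> (\<exists>x1 y1 x2 y2 :: nat list \<Rightarrow> complex.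
     \<forall>a\<in>idx d n. \<forall>b\<in>idx d n. v (a, b) = x1 a * y1 b + x2 a * y2 b)"
proof
  assume "schmidt_decomposable d n 2 v"
  then show "\<exists>x1 y1 x2 y2. \<forall>a\<in>idx d n. \<forall>b\<in>idx d n. v (a, b) = x1 a * y1 b + x2 a * y2 b"
    unfolding schmidt_decomposable_def numeral_2_eq_2 by auto
next
  assume "\<exists>x1 y1 x2 y2. \<forall>a\<in>idx d n. \<forall>b\<in>idx d n. v (a, b) = x1 a * y1 b + x2 a * y2 b"
  then obtain x1 y1 x2 y2 :: "nat list \<Rightarrow> complex"
    where "\<forall>a\<in>idx d n. \<forall>b\<in>idx d n. v (a, b) = x1 a * y1 b + x2 a * y2 b"
    by blast
  then show "schmidt_decomposable d n 2 v"
    unfolding schmidt_decomposable_def numeral_2_eq_2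
    by (intro exI[of _ "\<lambda>r. if r = 0 then x1 else x2"] exI[of _ "\<lambda>r. if r = 0 then y1 else y2"]) simp
qed

lemma diagonal_3x3_rank_2_zero_entry:
  fixes p q r u :: "nat \<Rightarrow> 'a::idom"
  assumes "\<And>s t. s < 3 \<Longrightarrow> t < 3 \<Longrightarrow> s \<noteq> t \<Longrightarrow> p s * q t + r s * u t = 0"
  shows "\<exists>s<3. p s * q s + r s * u s = 0"
proof -
  define m where "m s t = p s * q t + r s * u t" for s t
  \<comment> \<open>The matrix m factors through a 2-dimensional space, so its determinant vanishes.\<close>
  have "m 0 0 * (m 1 1 * m 2 2 - m 1 2 * m 2 1) - m 0 1 * (m 1 0 * m 2 2 - m 1 2 * m 2 0)
      + m 0 2 * (m 1 0 * m 2 1 - m 1 1 * m 2 0) = 0"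
    unfolding m_def by algebra
  then have "m 0 0 * m 1 1 * m 2 2 = 0"
    using assms by (simp add: m_def mult.assoc)
  then have "m 0 0 = 0 \<or> m 1 1 = 0 \<or> m 2 2 = 0"
    by simp
  moreover have "(0::nat) < 3" "(1::nat) < 3" "(2::nat) < 3"
    by simp_all
  ultimately show ?thesis
    unfolding m_def by blast
qed

lemma schmidt_decomposable_2_vanishing_diagonal_slice:
  assumes "schmidt_decomposable d (Suc n) 2 v" "3 \<le> d"
    and off: "\<And>i j. i < 3 \<Longrightarrow> j < 3 \<Longrightarrow> i \<noteq> j \<Longrightarrow> \<not> nonzero_vec d n (slice v i j)"
  shows "\<exists>i<3. \<not> nonzero_vec d n (slice v i i)"
proof (rule ccontr)
  assume "\<not> ?thesis"
  then obtain A B where AB: "\<And>s. s < 3 \<Longrightarrow> A s \<in> idx d n \<and> B s \<in> idx d n \<and> v (s # A s, s # B s) \<noteq> 0"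
    unfolding nonzero_vec_def by (simp add: Bex_def) metis
  obtain x1 y1 x2 y2 where xy: "\<forall>a\<in>idx d (Suc n). \<forall>b\<in>idx d (Suc n). v (a, b) = x1 a * y1 b + x2 a * y2 b"
    using assms(1) unfolding schmidt_decomposable_2_iff by blast
  have entry: "v (s # A s, t # B t) = x1 (s # A s) * y1 (t # B t) + x2 (s # A s) * y2 (t # B t)"
    if "s < 3" "t < 3" for s t
    using xy AB[OF that(1)] AB[OF that(2)] that assms(2) by simp
  have "\<exists>s<3. x1 (s # A s) * y1 (s # B s) + x2 (s # A s) * y2 (s # B s) = 0"
  proof (rule diagonal_3x3_rank_2_zero_entry)
    fix s t :: nat
    assume st: "s < 3" "t < 3" "s \<noteq> t"
    then have "v (s # A s, t # B t) = 0"
      using off[OF st] AB[OF st(1)] AB[OF st(2)] unfolding nonzero_vec_def by auto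
    then show "x1 (s # A s) * y1 (t # B t) + x2 (s # A s) * y2 (t # B t) = 0"
      using entry st by simp
  qed
  then show False
    using AB entry by auto
qed

definition block_form :: "nat \<Rightarrow> complex \<Rightarrow> complex \<Rightarrow> complex \<Rightarrow> (nat \<times> nat \<Rightarrow> nat \<times> nat \<Rightarrow> complex) \<Rightarrow> bool" where
  "block_form d \<gamma> \<alpha> \<epsilon> M \<longleftrightarrow> (\<forall>i<d. \<forall>j<d. \<forall>k<d. \<forall>l<d. M (i, j) (k, l) =
     (if i = j then (if k = l then (if k = i then \<alpha> else \<epsilon>) else 0)
      else (if (k, l) = (i, j) then \<gamma> else 0)))"

lemma block_form_sum:
  assumes "block_form d \<gamma> \<alpha> \<epsilon> M" "i < d" "j < d"
  shows "(\<Sum>k<d. \<Sum>l<d. M (i, j) (k, l) * f k l) =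
    (if i = j then (\<alpha> - \<epsilon>) * f i i + \<epsilon> * (\<Sum>k<d. f k k) else \<gamma> * f i j)"
proof -
  have "(\<Sum>k<d. \<Sum>l<d. M (i, j) (k, l) * f k l) =
      (\<Sum>k<d. if i = j then (if k = i then \<alpha> else \<epsilon>) * f k k else if k = i then \<gamma> * f i j else 0)"
    using assms by (auto simp: block_form_def if_distrib[of "\<lambda>z. z * _"] sum.delta' cong: if_cong intro!: sum.cong)
  also have "\<dots> = (if i = j then (\<Sum>k<d. \<epsilon> * f k k + (if k = i then (\<alpha> - \<epsilon>) * f k k else 0)) else \<gamma> * f i j)"
    using assms(2) by (auto simp: algebra_simps intro!: sum.cong)
  also have "\<dots> = (if i = j then (\<alpha> - \<epsilon>) * f i i + \<epsilon> * (\<Sum>k<d. f k k) else \<gamma> * f i j)"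
    using assms(2) by (simp add: sum.distrib sum_distrib_left)
  finally show ?thesis .
qed

lemma block_form_null_space_schmidt_2_trivial:
  fixes \<gamma> \<alpha> \<epsilon> :: complex
  assumes "3 \<le> d" and M: "block_form d \<gamma> \<alpha> \<epsilon> M" and "\<gamma> \<noteq> 0" "\<alpha> \<noteq> \<epsilon>"
  shows "in_null_space d n (tensor_pow n M) v \<Longrightarrow> schmidt_decomposable d n 2 v \<Longrightarrow> \<not> nonzero_vec d n v"
proof (induction n arbitrary: v)
  case 0
  then have "op_apply d 0 (tensor_pow 0 M) v ([], []) = 0"
    by (simp add: in_null_space_def idx_0)
  then show ?case
    by (simp add: nonzero_vec_def op_apply_def tensor_pow_def idx_0)
next
  case (Suc n)
  let ?w = "\<lambda>k l. op_apply d n (tensor_pow n M) (slice v k l)"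
  have eqn: "(if i = j then (\<alpha> - \<epsilon>) * ?w i i p + \<epsilon> * (\<Sum>k<d. ?w k k p) else \<gamma> * ?w i j p) = 0"
    if "i < d" "j < d" "p \<in> idx d n \<times> idx d n" for i j p
  proof -
    have "(\<Sum>k<d. \<Sum>l<d. M (i, j) (k, l) * ?w k l p) = 0"
      using Suc.prems(1) that unfolding in_null_space_tensor_pow_Suc_iff by blast
    then show ?thesis
      using block_form_sum[OF M that(1,2), of "\<lambda>k l. ?w k l p"] by simp
  qed
  have slice_null: "\<not> nonzero_vec d n (slice v i j)"
    if "i < d" "j < d" "in_null_space d n (tensor_pow n M) (slice v i j)" for i j
    using Suc.IH that schmidt_decomposable_slice[OF Suc.prems(2)] by blast
  have off: "\<not> nonzero_vec d n (slice v i j)" if "i < d" "j < d" "i \<noteq> j" for i j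
    using slice_null[OF that(1,2)] eqn[OF that(1,2)] that(3) \<open>\<gamma> \<noteq> 0\<close>
    by (simp add: in_null_space_def)
  \<comment> \<open>By eqn, (\<alpha> - \<epsilon>) ?w i i p = - \<epsilon> (\<Sum>k<d. ?w k k p) does not depend on i.\<close>
  have diag_eq: "?w i i p = ?w j j p" if "i < d" "j < d" "p \<in> idx d n \<times> idx d n" for i j p
  proof -
    have "(\<alpha> - \<epsilon>) * ?w i i p = (\<alpha> - \<epsilon>) * ?w j j p"
      using eqn[of i i p] eqn[of j j p] that by (simp add: add_eq_0_iff2)
    then show ?thesis
      using \<open>\<alpha> \<noteq> \<epsilon>\<close> by simp
  qed
  obtain i0 where "i0 < 3" "\<not> nonzero_vec d n (slice v i0 i0)"
    using schmidt_decomposable_2_vanishing_diagonal_slice[OF Suc.prems(2) \<open>3 \<le> d\<close>] off \<open>3 \<le> d\<close> by auto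
  then have diag: "\<not> nonzero_vec d n (slice v i i)" if "i < d" for i
    using slice_null[OF that that] diag_eq[OF that, of i0] \<open>3 \<le> d\<close>
    by (simp add: in_null_space_def op_apply_eq_0_of_not_nonzero_vec)
  show ?case
    using off diag by (metis nonzero_vec_Suc_iff)
qed

lemma sum_outer_ket_diag:
  "(\<Sum>m<d. outer (ket m m) (ket m m) (x, y) (z, w)) = (if x = y \<and> z = x \<and> w = x \<and> x < d then 1 else 0)"
proof -
  have "outer (ket m m) (ket m m) (x, y) (z, w) = (if m = x then (if x = y \<and> z = x \<and> w = x then 1 else 0) else 0)" for m
    by (auto simp: outer_def ket_def)
  then show ?thesis
    by simp
qed

lemma sum_pairs_lt_single:
  assumes "x < d" "y < d" "x \<noteq> y"
    and "\<And>m m'. m < m' \<Longrightarrow> (m, m') \<noteq> (min x y, max x y) \<Longrightarrow> f (m, m') = 0"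
  shows "sum f (pairs_lt d) = f (min x y, max x y)"
proof (rule sum.remove[THEN trans])
  show "finite (pairs_lt d)"
    by (rule finite_subset[of _ "{..<d} \<times> {..<d}"]) (auto simp: pairs_lt_def)
  show "(min x y, max x y) \<in> pairs_lt d"
    using assms(1-3) by (auto simp: pairs_lt_def min_def max_def)
  have "sum f (pairs_lt d - {(min x y, max x y)}) = 0"
    using assms(4) by (intro sum.neutral) (auto simp: pairs_lt_def)
  then show "f (min x y, max x y) + sum f (pairs_lt d - {(min x y, max x y)}) = f (min x y, max x y)"
    by simp
qed

lemma sqrt_2_mult_sqrt_2_complex: "complex_of_real (sqrt 2) * complex_of_real (sqrt 2) = 2"
  by (simp flip: of_real_mult)

lemma sum_outer_psi_minus:
  assumes "x < d" "y < d"
  shows "(\<Sum>(m, m')\<in>pairs_lt d. outer (psi_minus m m') (psi_minus m m') (x, y) (z, w)) =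
    (if x \<noteq> y then (of_bool ((z, w) = (x, y)) - of_bool ((z, w) = (y, x))) / 2 else 0)"
proof (cases "x = y")
  case True
  then show ?thesis
    by (auto simp: outer_def psi_minus_def ket_def pairs_lt_def intro!: sum.neutral)
next
  case False
  have "psi_minus m m' (x, y) = 0" if "m < m'" "(m, m') \<noteq> (min x y, max x y)" for m m'
    using that by (auto simp: psi_minus_def ket_def min_def max_def)
  then have "(\<Sum>(m, m')\<in>pairs_lt d. outer (psi_minus m m') (psi_minus m m') (x, y) (z, w)) =
      outer (psi_minus (min x y) (max x y)) (psi_minus (min x y) (max x y)) (x, y) (z, w)"
    using assms False by (subst sum_pairs_lt_single[of x d y]) (auto simp: outer_def)
  then show ?thesis
    using False by (auto simp: outer_def psi_minus_def ket_def min_def max_def sqrt_2_mult_sqrt_2_complex)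
qed

lemma sum_outer_psi_plus:
  assumes "x < d" "y < d"
  shows "(\<Sum>(m, m')\<in>pairs_lt d. outer (psi_plus m m') (psi_plus m m') (x, y) (z, w)) =
    (if x \<noteq> y then (of_bool ((z, w) = (x, y)) + of_bool ((z, w) = (y, x))) / 2 else 0)"
proof (cases "x = y")
  case True
  then show ?thesis
    by (auto simp: outer_def psi_plus_def ket_def pairs_lt_def intro!: sum.neutral)
next
  case False
  have "psi_plus m m' (x, y) = 0" if "m < m'" "(m, m') \<noteq> (min x y, max x y)" for m m'
    using that by (auto simp: psi_plus_def ket_def min_def max_def)
  then have "(\<Sum>(m, m')\<in>pairs_lt d. outer (psi_plus m m') (psi_plus m m') (x, y) (z, w)) =
      outer (psi_plus (min x y) (max x y)) (psi_plus (min x y) (max x y)) (x, y) (z, w)"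
    using assms False by (subst sum_pairs_lt_single[of x d y]) (auto simp: outer_def)
  then show ?thesis
    using False by (auto simp: outer_def psi_plus_def ket_def min_def max_def sqrt_2_mult_sqrt_2_complex)
qed

lemma partial_transpose_rho_block_form:
  fixes d :: nat and c :: real
  defines "\<beta> \<equiv> 1 / (real d * (real d - 1))"
  shows "block_form d (of_real ((\<beta> + c) / 2)) (of_real (1 / (2 * real d) - (real d - 1) / 2 * c))
    (of_real ((c - \<beta>) / 2)) (partial_transpose (rho d c))"
  unfolding block_form_def partial_transpose_def rho_def \<beta>_def
  by (auto simp: sum_outer_ket_diag sum_outer_psi_minus sum_outer_psi_plus field_simps)

lemma rho_block_parameters_nondegenerate:
  fixes d :: nat and c :: real
  defines "\<beta> \<equiv> 1 / (real d * (real d - 1))"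
  assumes "3 \<le> d" "0 \<le> c" "c < \<beta>"
  shows "complex_of_real ((\<beta> + c) / 2) \<noteq> 0"
    and "complex_of_real (1 / (2 * real d) - (real d - 1) / 2 * c) \<noteq> complex_of_real ((c - \<beta>) / 2)"
proof -
  have "0 < \<beta>" "c * (real d * (real d - 1)) < 1"
    using assms by (simp_all add: field_simps)
  then have "(\<beta> + c) / 2 \<noteq> 0"
    using assms(3) by simp
  then show "complex_of_real ((\<beta> + c) / 2) \<noteq> 0"
    unfolding of_real_eq_0_iff .
  have "1 / (2 * real d) - (real d - 1) / 2 * c - (c - \<beta>) / 2
      = (1 - c * (real d * (real d - 1))) / (2 * (real d - 1))"
    using assms(2) by (simp add: \<beta>_def field_simps)
  also have "\<dots> > 0"
    using \<open>c * (real d * (real d - 1)) < 1\<close> assms(2) by (intro divide_pos_pos) auto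
  finally have "1 / (2 * real d) - (real d - 1) / 2 * c \<noteq> (c - \<beta>) / 2"
    by simp
  then show "complex_of_real (1 / (2 * real d) - (real d - 1) / 2 * c) \<noteq> complex_of_real ((c - \<beta>) / 2)"
    unfolding of_real_eq_iff .
qed

theorem theorem3:
  fixes d n :: nat and c :: real and v :: "nat list \<times> nat list \<Rightarrow> complex"
  assumes "d \<ge> 3" and "n \<ge> 1" and "0 \<le> c" and "c < 1 / (real d * (real d - 1))"
    and "in_null_space d n (tensor_pow n (partial_transpose (rho d c))) v"
    and "nonzero_vec d n v"
  shows "schmidt_rank d n v \<ge> 3"
proof (rule ccontr)
  assume "\<not> schmidt_rank d n v \<ge> 3"
  then have "schmidt_decomposable d n 2 v"
    using schmidt_decomposable_mono[OF schmidt_decomposable_schmidt_rank] by simp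
  then have "\<not> nonzero_vec d n v"
    using block_form_null_space_schmidt_2_trivial[OF assms(1) partial_transpose_rho_block_form
        rho_block_parameters_nondegenerate[OF assms(1,3,4)] assms(5)]
    by blast
  with assms(6) show False
    by contradiction
qed

end
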